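(* Let $m\ge4$ and let $(c_1,\dots,c_m)\in\mathbb{C}^m$ be a quiddity cycle with at least one nonzero entry, with associated tame frieze pattern entries $a_{i,j}$. Then there exists a triangulation of the convex $m$-gon with vertices $1,\dots,m$ such that $a_{i,j}\ne0$ for every diagonal $(i,j)$ of the triangulation (i.e. the frieze pattern has a cluster without zero entry).
   Context: $\eta(c)=\begin{pmatrix}c&-1\\1&0\end{pmatrix}$. A quiddity cycle is $(c_1,\dots,c_m)$ with $\eta(c_1)\cdots\eta(c_m)=-I$. The associated tame frieze pattern is built as follows: - extend $(c_k)$ $m$-periodically; - set $M_{i,j}=\eta(c_i)\cdots\eta(c_j)$ for $i-1\le j$, the empty product being $I$; - its entries are $a_{i,j+2}=(M_{i,j})_{1,1}$ for $i-1\le j\le i+m-3$. A diagonal of the $m$-gon with vertices $1,\dots,m$ (in cyclic order) is a pair $(i,j)$ with $1\le i<j\le m$, $j-i\ge2$, $(i,j)\ne(1,m)$. A triangulation (cluster) is a maximal set of pairwise non-crossing diagonals; the corresponding entries $a_{i,j}$ form a cluster of the frieze pattern. *)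

theory Defs
  imports "HOL-Analysis.Analysis"
begin

definition eta :: "complex \<Rightarrow> complex^2^2" where
  "eta c = vector [vector [c, -1], vector [1, 0]]"

definition eta_prod :: "complex list \<Rightarrow> complex^2^2" where
  "eta_prod cs = foldr (\<lambda>c A. eta c ** A) cs (mat 1)"

definition quiddity_cycle :: "complex list \<Rightarrow> bool" where
  "quiddity_cycle cs \<longleftrightarrow> eta_prod cs = - mat 1"

text \<open>m-periodic extension, indices k \<ge> 1: c_k = cs ! ((k-1) mod m).\<close>
definition cper :: "complex list \<Rightarrow> nat \<Rightarrow> complex" where
  "cper cs k = cs ! ((k - 1) mod length cs)"

text \<open>M_{i,j} = eta(c_i) ... eta(c_j) (empty product I when j = i - 1).\<close>
definition Mfr :: "complex list \<Rightarrow> nat \<Rightarrow> nat \<Rightarrow> complex^2^2" where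
  "Mfr cs i j = eta_prod (map (cper cs) [i..<Suc j])"

text \<open>Frieze entry a_{i,j} = (M_{i,j-2})_{1,1}, for i + 1 \<le> j.\<close>
definition frieze_entry :: "complex list \<Rightarrow> nat \<Rightarrow> nat \<Rightarrow> complex" where
  "frieze_entry cs i j = Mfr cs i (j - 2) $ 1 $ 1"

definition is_diagonal :: "nat \<Rightarrow> nat \<times> nat \<Rightarrow> bool" where
  "is_diagonal m d \<longleftrightarrow> (case d of (i, j) \<Rightarrow>
     1 \<le> i \<and> i < j \<and> j \<le> m \<and> j - i \<ge> 2 \<and> (i, j) \<noteq> (1, m))"

definition crossing :: "nat \<times> nat \<Rightarrow> nat \<times> nat \<Rightarrow> bool" where
  "crossing d e \<longleftrightarrow> (case d of (i, j) \<Rightarrow> case e of (k, l) \<Rightarrow>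
     (i < k \<and> k < j \<and> j < l) \<or> (k < i \<and> i < l \<and> l < j))"

definition polygon_triangulation :: "nat \<Rightarrow> (nat \<times> nat) set \<Rightarrow> bool" where
  "polygon_triangulation m T \<longleftrightarrow>
     (\<forall>d\<in>T. is_diagonal m d) \<and>
     (\<forall>d\<in>T. \<forall>e\<in>T. \<not> crossing d e) \<and>
     (\<forall>d. is_diagonal m d \<and> d \<notin> T \<longrightarrow> (\<exists>e\<in>T. crossing d e))"

end

theory Submission
  imports Defs
begin

text \<open>
Put v(0) = (0, -1), v(1) = (1, 0) and v(k+1) = c(k) v(k) - v(k-1). The entries of the products
of the matrices eta(c(k)) are 2x2 determinants of these vectors; in particular
a(i,j) = det(v(i-1), v(j-1)), and the quiddity condition says v(k+m) = -v(k).
Colour vertex k of the polygon by the point [v(k-1)] of the projective line. Then a(i,j) = 0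
exactly when i and j have the same colour; adjacent vertices have different colours because
det(v(k-1), v(k)) = 1, and a nonzero c(k) = det(v(k-1), v(k+1)) gives three consecutive vertices
with three different colours.

So it suffices that a polygon properly coloured with at least three colours has a triangulation
without monochromatic diagonal. By induction on the number of vertices: there is an ear p, w, s
with differently coloured p, s whose removal leaves a proper colouring with at least three
colours. If some colour occurs only once, at u, take the ear after u; otherwise the colours
cannot alternate between two values, so some ear has p, s of different colours, and every
colour survives the removal of w. Triangulate the smaller polygon and add the diagonal (p, s).
\<close>

section \<open>Frieze vectors\<close>

fun frieze_vec :: "complex list \<Rightarrow> nat \<Rightarrow> complex \<times> complex" where
  "frieze_vec cs 0 = (0, -1)"
| "frieze_vec cs (Suc 0) = (1, 0)"
| "frieze_vec cs (Suc (Suc n)) =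
     (cper cs (Suc n) * fst (frieze_vec cs (Suc n)) - fst (frieze_vec cs n),
      cper cs (Suc n) * snd (frieze_vec cs (Suc n)) - snd (frieze_vec cs n))"

definition det2 :: "complex \<times> complex \<Rightarrow> complex \<times> complex \<Rightarrow> complex" where
  "det2 x y = fst x * snd y - snd x * fst y"

lemma det2_frieze_vec_Suc: "det2 (frieze_vec cs n) (frieze_vec cs (Suc n)) = 1"
  by (induction n) (auto simp: det2_def algebra_simps)

lemma det2_frieze_vec_Suc_Suc: "det2 (frieze_vec cs n) (frieze_vec cs (Suc (Suc n))) = cper cs (Suc n)"
  using det2_frieze_vec_Suc[of cs n] by (simp add: det2_def algebra_simps)

lemma frieze_vec_nonzero: "frieze_vec cs n \<noteq> (0, 0)"
  using det2_frieze_vec_Suc[of cs n] by (auto simp: det2_def)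

lemma eta_prod_snoc: "eta_prod (xs @ [c]) = eta_prod xs ** eta c"
proof -
  have "foldr (\<lambda>c A. eta c ** A) xs B = eta_prod xs ** B" for B
    by (induction xs) (auto simp: eta_prod_def matrix_mul_assoc)
  then show ?thesis
    by (simp add: eta_prod_def)
qed

lemma matrix_mult_eta_columns:
  "(A ** eta c) $ r $ 1 = A $ r $ 1 * c + A $ r $ 2"
  "(A ** eta c) $ r $ 2 = - A $ r $ 1"
  by (simp_all add: matrix_matrix_mult_def sum_2 eta_def)

lemma eta_prod_upt_entries:
  assumes "1 \<le> i"
  shows "eta_prod (map (cper cs) [i..<i + n]) $ 1 $ 1 = det2 (frieze_vec cs (i - 1)) (frieze_vec cs (i + n))
    \<and> eta_prod (map (cper cs) [i..<i + n]) $ 1 $ 2 = - det2 (frieze_vec cs (i - 1)) (frieze_vec cs (i + n - 1))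
    \<and> eta_prod (map (cper cs) [i..<i + n]) $ 2 $ 1 = det2 (frieze_vec cs i) (frieze_vec cs (i + n))
    \<and> eta_prod (map (cper cs) [i..<i + n]) $ 2 $ 2 = - det2 (frieze_vec cs i) (frieze_vec cs (i + n - 1))"
proof (induction n)
  case 0
  have "det2 (frieze_vec cs (i - 1)) (frieze_vec cs i) = 1"
    using det2_frieze_vec_Suc[of cs "i - 1"] assms by simp
  then show ?case
    by (simp add: eta_prod_def mat_def det2_def algebra_simps)
next
  case (Suc n)
  obtain k where k: "i + n = Suc k"
    using assms by (cases "i + n") auto
  have upt_snoc: "[i..<i + Suc n] = [i..<i + n] @ [i + n]"
    by simp
  show ?case
    using Suc unfolding upt_snoc eta_prod_snoc map_append list.map matrix_mult_eta_columns
    by (simp add: k del: upt_Suc) (simp add: det2_def algebra_simps)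
qed

lemma frieze_entry_eq_det2:
  assumes "1 \<le> i" "i + 2 \<le> j"
  shows "frieze_entry cs i j = det2 (frieze_vec cs (i - 1)) (frieze_vec cs (j - 1))"
proof -
  have "Suc (j - 2) = i + (j - 1 - i)" "i + (j - 1 - i) = j - 1"
    using assms by simp_all
  then show ?thesis
    using eta_prod_upt_entries[OF assms(1), of cs "j - 1 - i"]
    unfolding frieze_entry_def Mfr_def by simp
qed

lemma map_cper_upt: "map (cper cs) [1..<1 + length cs] = cs"
  by (rule nth_equalityI) (simp_all add: cper_def nth_upt del: upt_Suc)

lemma cper_add_length: "cper cs (Suc n + length cs) = cper cs (Suc n)"
  by (simp add: cper_def)

lemma frieze_vec_length:
  assumes "quiddity_cycle cs"
  shows "frieze_vec cs (length cs) = (0, 1)" "frieze_vec cs (Suc (length cs)) = (-1, 0)"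
proof -
  let ?m = "length cs"
  have "eta_prod (map (cper cs) [1..<1 + ?m]) = - mat 1"
    using assms map_cper_upt[of cs] unfolding quiddity_cycle_def by simp
  then have "det2 (frieze_vec cs 0) (frieze_vec cs (Suc ?m)) = -1"
    "det2 (frieze_vec cs 0) (frieze_vec cs ?m) = 0"
    "det2 (frieze_vec cs 1) (frieze_vec cs (Suc ?m)) = 0"
    "det2 (frieze_vec cs 1) (frieze_vec cs ?m) = 1"
    using eta_prod_upt_entries[of 1 cs ?m] by (simp_all add: mat_def)
  then show "frieze_vec cs ?m = (0, 1)" "frieze_vec cs (Suc ?m) = (-1, 0)"
    by (auto simp: det2_def prod_eq_iff)
qed

lemma quiddity_cycle_nonempty: "quiddity_cycle cs \<Longrightarrow> cs \<noteq> []"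
  using frieze_vec_length(1)[of cs] by auto

lemma frieze_vec_add_length:
  "quiddity_cycle cs \<Longrightarrow> frieze_vec cs (n + length cs) = - frieze_vec cs n"
proof (induction cs n rule: frieze_vec.induct)
  case (3 cs n)
  then show ?case
    using cper_add_length[of cs n] by simp
qed (simp_all add: frieze_vec_length)

section \<open>Colouring the vertices by projective points\<close>

definition proj_point :: "complex \<times> complex \<Rightarrow> complex \<times> complex" where
  "proj_point v = (if fst v \<noteq> 0 then (1, snd v / fst v) else (0, 1))"

lemma proj_point_eq_iff_det2:
  assumes "v \<noteq> (0, 0)" "w \<noteq> (0, 0)"
  shows "proj_point v = proj_point w \<longleftrightarrow> det2 v w = 0"
proof -
  obtain a b c d where v: "v = (a, b)" and w: "w = (c, d)"
    by (cases v, cases w)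
  show ?thesis
  proof (cases "a = 0 \<or> c = 0")
    case True
    then show ?thesis
      using assms v w by (auto simp: proj_point_def det2_def)
  next
    case False
    then have "b / a = d / c \<longleftrightarrow> a * d - b * c = 0"
      by (auto simp: field_simps)
    then show ?thesis
      using False v w by (auto simp: proj_point_def det2_def)
  qed
qed

lemma proj_point_uminus: "proj_point (- v) = proj_point v"
  by (cases v) (simp add: proj_point_def)

definition frieze_colour :: "complex list \<Rightarrow> nat \<Rightarrow> complex \<times> complex" where
  "frieze_colour cs k = proj_point (frieze_vec cs (k - 1))"

lemma frieze_colour_eq_iff:
  "frieze_colour cs i = frieze_colour cs j \<longleftrightarrow> det2 (frieze_vec cs (i - 1)) (frieze_vec cs (j - 1)) = 0"
  unfolding frieze_colour_def by (rule proj_point_eq_iff_det2) (rule frieze_vec_nonzero)+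

lemma frieze_colour_Suc: "1 \<le> k \<Longrightarrow> frieze_colour cs k \<noteq> frieze_colour cs (Suc k)"
  using det2_frieze_vec_Suc[of cs "k - 1"] by (simp add: frieze_colour_eq_iff)

lemma frieze_colour_Suc_Suc:
  "cper cs k \<noteq> 0 \<Longrightarrow> 1 \<le> k \<Longrightarrow> frieze_colour cs k \<noteq> frieze_colour cs (Suc (Suc k))"
  using det2_frieze_vec_Suc_Suc[of cs "k - 1"] by (simp add: frieze_colour_eq_iff)

lemma frieze_colour_add_length:
  "quiddity_cycle cs \<Longrightarrow> 1 \<le> k \<Longrightarrow> frieze_colour cs (k + length cs) = frieze_colour cs k"
  using frieze_vec_add_length[of cs "k - 1"] by (simp add: frieze_colour_def proj_point_uminus)

lemma frieze_colour_in_range: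
  assumes "quiddity_cycle cs" "1 \<le> k"
  shows "frieze_colour cs k \<in> frieze_colour cs ` {1..length cs}"
  using assms(2)
proof (induction k rule: less_induct)
  case (less k)
  show ?case
  proof (cases "k \<le> length cs")
    case False
    have "cs \<noteq> []"
      using quiddity_cycle_nonempty[OF assms(1)] .
    then have "k - length cs < k" "1 \<le> k - length cs"
      using False by simp_all
    then show ?thesis
      using less.IH[of "k - length cs"] frieze_colour_add_length[OF assms(1), of "k - length cs"]
        False by simp
  qed (use less.prems in simp)
qed

section \<open>Cyclic order on a finite set of vertices\<close>

definition cyclic_succ :: "nat set \<Rightarrow> nat \<Rightarrow> nat \<Rightarrow> bool" where
  "cyclic_succ S x y \<longleftrightarrow> x \<in> S \<and> y \<in> S \<and> x \<noteq> y \<and>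
     ((x < y \<and> (\<forall>z\<in>S. \<not> (x < z \<and> z < y))) \<or> (y < x \<and> (\<forall>z\<in>S. y \<le> z \<and> z \<le> x)))"

lemma cyclic_succD: "cyclic_succ S x y \<Longrightarrow> x \<in> S \<and> y \<in> S \<and> x \<noteq> y"
  unfolding cyclic_succ_def by auto

lemma cyclic_succ_unique: "cyclic_succ S x y \<Longrightarrow> cyclic_succ S x z \<Longrightarrow> y = z"
  unfolding cyclic_succ_def by (elim conjE disjE) force+

lemma cyclic_succ_unique_pred: "cyclic_succ S y x \<Longrightarrow> cyclic_succ S z x \<Longrightarrow> y = z"
  unfolding cyclic_succ_def by (elim conjE disjE) force+

lemma cyclic_succ_two_cycle: "cyclic_succ S x y \<Longrightarrow> cyclic_succ S y x \<Longrightarrow> S \<subseteq> {x, y}"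
  unfolding cyclic_succ_def by (elim conjE disjE) force+

lemma card_le_2_if_subset_doubleton: "S \<subseteq> {x, y} \<Longrightarrow> card S \<le> 2"
  by (rule order_trans[OF card_mono[of "{x, y}"]]) (auto simp: card_insert_if)

lemma cyclic_succ_asym:
  "finite S \<Longrightarrow> card S \<ge> 3 \<Longrightarrow> cyclic_succ S x y \<Longrightarrow> \<not> cyclic_succ S y x"
  using cyclic_succ_two_cycle card_le_2_if_subset_doubleton by fastforce

lemma cyclic_succ_Min_above:
  assumes "finite S" "x \<in> S" "\<exists>y\<in>S. x < y"
  shows "cyclic_succ S x (Min {y\<in>S. x < y})"
proof -
  let ?A = "{y\<in>S. x < y}"
  have "finite ?A" "?A \<noteq> {}"
    using assms by auto
  then have "Min ?A \<in> S" "x < Min ?A" "\<forall>z\<in>?A. Min ?A \<le> z"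
    using Min_in[of ?A] by simp_all
  then show ?thesis
    using assms(2) unfolding cyclic_succ_def by (metis (mono_tags) leD less_imp_neq mem_Collect_eq)
qed

lemma cyclic_succ_Max_below:
  assumes "finite S" "y \<in> S" "\<exists>x\<in>S. x < y"
  shows "cyclic_succ S (Max {x\<in>S. x < y}) y" "Max {x\<in>S. x < y} < y"
proof -
  let ?A = "{x\<in>S. x < y}"
  have "finite ?A" "?A \<noteq> {}"
    using assms by auto
  then have "Max ?A \<in> S" "Max ?A < y" "\<forall>z\<in>?A. z \<le> Max ?A"
    using Max_in[of ?A] by simp_all
  then show "cyclic_succ S (Max ?A) y" "Max ?A < y"
    using assms(2) unfolding cyclic_succ_def by (metis (mono_tags) leD less_imp_neq mem_Collect_eq)+
qed

lemma cyclic_succ_Max_Min: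
  assumes "finite S" "card S \<ge> 2"
  shows "cyclic_succ S (Max S) (Min S)"
proof -
  have "S \<noteq> {}"
    using assms by auto
  then have bounds: "Min S \<in> S" "Max S \<in> S" "\<forall>z\<in>S. Min S \<le> z \<and> z \<le> Max S"
    using assms(1) by simp_all
  have "Min S \<noteq> Max S"
  proof
    assume "Min S = Max S"
    then have "S \<subseteq> {Min S}"
      using bounds(3) by (auto intro: antisym)
    then have "card S \<le> card {Min S}"
      by (rule card_mono[rotated]) simp
    then show False
      using assms(2) by simp
  qed
  then show ?thesis
    using bounds unfolding cyclic_succ_def by force
qed

lemma cyclic_succ_exists:
  assumes "finite S" "card S \<ge> 2" "x \<in> S"
  obtains y where "cyclic_succ S x y"
proof (cases "\<exists>y\<in>S. x < y")
  case True
  then show ?thesis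
    using cyclic_succ_Min_above[OF assms(1,3)] that by blast
next
  case False
  then have "x = Max S"
    using assms by (intro Max_eqI[symmetric]) (auto simp: not_less)
  then show ?thesis
    using cyclic_succ_Max_Min[OF assms(1,2)] that by blast
qed

lemma cyclic_pred_exists:
  assumes "finite S" "card S \<ge> 2" "y \<in> S"
  obtains x where "cyclic_succ S x y"
proof (cases "\<exists>x\<in>S. x < y")
  case True
  then show ?thesis
    using cyclic_succ_Max_below(1)[OF assms(1,3)] that by blast
next
  case False
  then have "y = Min S"
    using assms by (intro Min_eqI[symmetric]) (auto simp: not_less)
  then show ?thesis
    using cyclic_succ_Max_Min[OF assms(1,2)] that by blast
qed

lemma cyclic_succ_Diff: "cyclic_succ S x y \<Longrightarrow> x \<noteq> w \<Longrightarrow> y \<noteq> w \<Longrightarrow> cyclic_succ (S - {w}) x y"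
  unfolding cyclic_succ_def by auto

lemma cyclic_succ_Diff_skip:
  assumes "cyclic_succ S x w" "cyclic_succ S w z" "x \<noteq> z"
  shows "cyclic_succ (S - {w}) x z"
proof -
  have in_S: "x \<in> S" "z \<in> S" "x \<noteq> w" "z \<noteq> w"
    using assms unfolding cyclic_succ_def by auto
  consider "x < w" "w < z" | "x < w" "z < w" | "w < x" "w < z" | "w < x" "z < w"
    using in_S by linarith
  then show ?thesis
  proof cases
    case 1
    then have "\<forall>t\<in>S. \<not> (x < t \<and> t < w)" "\<forall>t\<in>S. \<not> (w < t \<and> t < z)"
      using assms unfolding cyclic_succ_def by auto
    then show ?thesis
      using 1 in_S unfolding cyclic_succ_def by (auto simp: not_less) (metis le_antisym not_le)
  next
    case 2
    then have "\<forall>t\<in>S. \<not> (x < t \<and> t < w)" "\<forall>t\<in>S. z \<le> t \<and> t \<le> w"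
      using assms unfolding cyclic_succ_def by auto
    then show ?thesis
      using 2 in_S assms(3) unfolding cyclic_succ_def
      by (auto simp: not_less) (metis le_neq_implies_less not_less)+
  next
    case 3
    then have "\<forall>t\<in>S. w \<le> t \<and> t \<le> x" "\<forall>t\<in>S. \<not> (w < t \<and> t < z)"
      using assms unfolding cyclic_succ_def by auto
    then show ?thesis
      using 3 in_S assms(3) unfolding cyclic_succ_def
      by (auto simp: not_less) (metis le_neq_implies_less not_less)+
  next
    case 4
    then have "\<forall>t\<in>S. w \<le> t \<and> t \<le> x" "\<forall>t\<in>S. z \<le> t \<and> t \<le> w"
      using assms unfolding cyclic_succ_def by auto
    then show ?thesis
      using 4 in_S by auto
  qed
qed

lemma cyclic_succ_Diff_cases:
  assumes "finite S" "card S \<ge> 3" "cyclic_succ S p w" "cyclic_succ S w s"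
    and "cyclic_succ (S - {w}) x y"
  shows "cyclic_succ S x y \<or> (x = p \<and> y = s)"
proof -
  have x: "x \<in> S" "x \<noteq> w"
    using assms(5) unfolding cyclic_succ_def by auto
  have "card S \<ge> 2"
    using assms(2) by simp
  then obtain x' where x': "cyclic_succ S x x'"
    using cyclic_succ_exists[OF assms(1) _ x(1)] by blast
  show ?thesis
  proof (cases "x' = w")
    case True
    then have "x = p"
      using cyclic_succ_unique_pred[OF _ assms(3)] x' by simp
    moreover have "p \<noteq> s"
      using cyclic_succ_asym[OF assms(1,2)] assms(3,4) by blast
    ultimately have "cyclic_succ (S - {w}) x s"
      using cyclic_succ_Diff_skip[OF assms(3,4)] by simp
    then show ?thesis
      using cyclic_succ_unique[OF assms(5)] \<open>x = p\<close> by simp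
  next
    case False
    then have "cyclic_succ (S - {w}) x x'"
      using cyclic_succ_Diff[OF x'] x by simp
    then show ?thesis
      using cyclic_succ_unique[OF assms(5)] x' by simp
  qed
qed

section \<open>Triangulations of a polygon with vertex set S\<close>

definition diagonal_on :: "nat set \<Rightarrow> nat \<times> nat \<Rightarrow> bool" where
  "diagonal_on S d \<longleftrightarrow> (case d of (a, b) \<Rightarrow> a \<in> S \<and> b \<in> S \<and> a < b \<and>
     (\<exists>x\<in>S. a < x \<and> x < b) \<and> (\<exists>x\<in>S. x < a \<or> b < x))"

definition triangulation_on :: "nat set \<Rightarrow> (nat \<times> nat) set \<Rightarrow> bool" where
  "triangulation_on S T \<longleftrightarrow> (\<forall>d\<in>T. diagonal_on S d) \<and> (\<forall>d\<in>T. \<forall>e\<in>T. \<not> crossing d e) \<and>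
     (\<forall>d. diagonal_on S d \<and> d \<notin> T \<longrightarrow> (\<exists>e\<in>T. crossing d e))"

text \<open>The diagonal (a, b) cuts off the single vertex w of the polygon.\<close>
definition ear_on :: "nat set \<Rightarrow> nat \<Rightarrow> nat \<Rightarrow> nat \<Rightarrow> bool" where
  "ear_on S w a b \<longleftrightarrow> a < b \<and> a \<in> S \<and> b \<in> S \<and> w \<in> S \<and>
     ((a < w \<and> w < b \<and> (\<forall>z\<in>S. a < z \<and> z < b \<longrightarrow> z = w)) \<or>
      ((w < a \<or> b < w) \<and> (\<forall>z\<in>S. z < a \<or> b < z \<longrightarrow> z = w)))"

lemma crossing_sym: "crossing d e = crossing e d"
  by (cases d; cases e) (auto simp: crossing_def)

lemma card_ge_4_if_diagonal_on: "finite S \<Longrightarrow> diagonal_on S d \<Longrightarrow> card S \<ge> 4"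
proof -
  assume "finite S" "diagonal_on S d"
  then obtain a b x y where "a \<in> S" "b \<in> S" "x \<in> S" "y \<in> S" "a < x" "x < b" "y < a \<or> b < y"
    unfolding diagonal_on_def by (cases d) auto
  then have "card {a, x, b, y} = 4" "{a, x, b, y} \<subseteq> S"
    by auto
  then show "card S \<ge> 4"
    using card_mono[OF \<open>finite S\<close>] by metis
qed

lemma diagonal_on_Diff: "diagonal_on (S - {w}) d \<Longrightarrow> diagonal_on S d"
  unfolding diagonal_on_def by (cases d) auto

lemma ear_on_cases:
  assumes "ear_on S w a b"
  obtains (inside) "a < w" "w < b" "\<And>z. z \<in> S \<Longrightarrow> a < z \<Longrightarrow> z < b \<Longrightarrow> z = w"
    | (outside) "w < a \<or> b < w" "\<And>z. z \<in> S \<Longrightarrow> z < a \<or> b < z \<Longrightarrow> z = w"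
  using assms unfolding ear_on_def by blast

lemma ear_onD: "ear_on S w a b \<Longrightarrow> a < b \<and> a \<in> S \<and> b \<in> S \<and> w \<in> S \<and> a \<noteq> w \<and> b \<noteq> w"
  unfolding ear_on_def by auto

lemma ear_on_cyclic_succ:
  assumes "cyclic_succ S p w" "cyclic_succ S w s" "p \<noteq> s"
  shows "ear_on S w (min p s) (max p s)"
  using assms unfolding cyclic_succ_def ear_on_def
  by (elim conjE disjE; simp add: min_def max_def; (elim conjE)?; (intro conjI)?; force)

lemma ear_on_not_crossing:
  assumes "ear_on S w a b" "diagonal_on (S - {w}) (x, y)"
  shows "\<not> crossing (x, y) (a, b)"
  using assms(1)
proof (cases rule: ear_on_cases)
  case inside
  then show ?thesis
    using assms(2) unfolding diagonal_on_def crossing_def by force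
next
  case outside
  then show ?thesis
    using assms(2) unfolding diagonal_on_def crossing_def by force
qed

lemma ear_on_diagonal_Diff:
  assumes E: "ear_on S w a b" and d: "diagonal_on S (x, y)"
    and n: "x \<noteq> w" "y \<noteq> w" "(x, y) \<noteq> (a, b)"
  shows "diagonal_on (S - {w}) (x, y)"
proof -
  have B: "a < b" "a \<in> S" "b \<in> S" "w \<in> S" "a \<noteq> w" "b \<noteq> w"
    using ear_onD[OF E] by auto
  have D: "x \<in> S" "y \<in> S" "x < y"
    using d unfolding diagonal_on_def by auto
  obtain t where t: "t \<in> S" "x < t" "t < y"
    using d unfolding diagonal_on_def by auto
  obtain u where u: "u \<in> S" "u < x \<or> y < u"
    using d unfolding diagonal_on_def by auto
  have "(\<exists>t\<in>S - {w}. x < t \<and> t < y) \<and> (\<exists>u\<in>S - {w}. u < x \<or> y < u)"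
    using E
  proof (cases rule: ear_on_cases)
    case inside
    have "\<exists>t\<in>S - {w}. x < t \<and> t < y"
    proof (cases "t = w")
      case True
      show ?thesis
      proof (cases "x < a")
        case True
        then show ?thesis
          using B \<open>t = w\<close> t inside(1,2) by auto
      next
        case False
        then have "x = a"
          using inside(2) inside(3)[of x] D t \<open>t = w\<close> n by (cases "a < x") auto
        then have "b < y"
          using inside(3)[of y] D t \<open>t = w\<close> n by (cases "b < y") auto
        then show ?thesis
          using B \<open>x = a\<close> by auto
      qed
    qed (use t in auto)
    moreover have "\<exists>u\<in>S - {w}. u < x \<or> y < u"
    proof (cases "u = w")
      case True
      then show ?thesis
        using u B inside(1,2) by (metis DiffI less_trans singletonD)
    qed (use u in auto)
    ultimately show ?thesis ..
  next
    case outside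
    have "a \<le> x" "y \<le> b"
      using outside(2)[of x] outside(2)[of y] D n by force+
    then have "\<exists>t\<in>S - {w}. x < t \<and> t < y"
      using t outside(1) by auto
    moreover have "\<exists>u\<in>S - {w}. u < x \<or> y < u"
    proof (cases "a < x")
      case False
      then have "y < b"
        using \<open>a \<le> x\<close> \<open>y \<le> b\<close> n(3) by auto
      then show ?thesis
        using B by auto
    qed (use B in auto)
    ultimately show ?thesis ..
  qed
  then show ?thesis
    using D n unfolding diagonal_on_def by auto
qed

lemma ear_on_crossing_apex:
  assumes E: "ear_on S w a b" and d: "diagonal_on S (x, y)" and apex: "x = w \<or> y = w"
  shows "crossing (x, y) (a, b)"
proof -
  have D: "x \<in> S" "y \<in> S" "x < y"
    using d unfolding diagonal_on_def by auto
  obtain t where t: "t \<in> S" "x < t" "t < y"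
    using d unfolding diagonal_on_def by auto
  obtain u where u: "u \<in> S" "u < x \<or> y < u"
    using d unfolding diagonal_on_def by auto
  from E show ?thesis
  proof (cases rule: ear_on_cases)
    case inside
    show ?thesis
    proof (cases "x = w")
      case True
      then have "b < y"
        using inside(1,2) inside(3)[of y] inside(3)[of t] D t
        by (smt (verit) less_trans nat_neq_iff)
      then show ?thesis
        using True inside(1,2) unfolding crossing_def by auto
    next
      case False
      then have "x < a"
        using apex inside(1,2) inside(3)[of x] inside(3)[of t] D t
        by (smt (verit) less_trans nat_neq_iff)
      then show ?thesis
        using False apex inside(1,2) unfolding crossing_def by auto
    qed
  next
    case outside
    show ?thesis
    proof (cases "x = w")
      case True
      then have "w < a" "a < y" "y < b"
        using outside outside(2)[of y] outside(2)[of t] outside(2)[of u] D t u 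
        by (smt (verit) less_trans nat_neq_iff)+
      then show ?thesis
        using True unfolding crossing_def by auto
    next
      case False
      then have "b < w" "a < x" "x < b"
        using apex outside outside(2)[of x] outside(2)[of t] outside(2)[of u] D t u 
        by (smt (verit) less_trans nat_neq_iff)+
      then show ?thesis
        using False apex unfolding crossing_def by auto
    qed
  qed
qed

lemma ear_on_diagonal:
  assumes "finite S" "card S \<ge> 4" "ear_on S w a b"
  shows "diagonal_on S (a, b)"
proof -
  have B: "a < b" "a \<in> S" "b \<in> S" "w \<in> S" "a \<noteq> w" "b \<noteq> w"
    using ear_onD[OF assms(3)] by auto
  have "\<not> S \<subseteq> {a, b, w}"
  proof
    assume "S \<subseteq> {a, b, w}"
    then have "card S \<le> card {a, b, w}"
      by (intro card_mono) auto
    also have "\<dots> \<le> 3"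
      by (simp add: card_insert_if)
    finally show False
      using assms(2) by simp
  qed
  then obtain z where z: "z \<in> S" "z \<noteq> a" "z \<noteq> b" "z \<noteq> w"
    by auto
  from assms(3) show ?thesis
  proof (cases rule: ear_on_cases)
    case inside
    then have "z < a \<or> b < z"
      using inside(3)[of z] z by (metis nat_neq_iff)
    then show ?thesis
      unfolding diagonal_on_def using B inside(1,2) z(1) by auto
  next
    case outside
    then have "a < z \<and> z < b"
      using outside(2)[of z] z by (metis nat_neq_iff)
    then show ?thesis
      unfolding diagonal_on_def using B outside(1) z(1) by auto
  qed
qed

lemma triangulation_on_insert_ear:
  assumes "finite S" "card S \<ge> 4" "ear_on S w a b" "triangulation_on (S - {w}) T"
  shows "triangulation_on S (insert (a, b) T)"
proof -
  have T: "\<forall>d\<in>T. diagonal_on (S - {w}) d" "\<forall>d\<in>T. \<forall>e\<in>T. \<not> crossing d e"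
    "\<forall>d. diagonal_on (S - {w}) d \<and> d \<notin> T \<longrightarrow> (\<exists>e\<in>T. crossing d e)"
    using assms(4) unfolding triangulation_on_def by auto
  have "\<not> crossing d (a, b)" if "d \<in> T" for d
    using ear_on_not_crossing[OF assms(3)] T(1) that by (cases d) blast
  moreover have "\<not> crossing (a, b) (a, b)"
    unfolding crossing_def by auto
  moreover have "\<exists>e\<in>insert (a, b) T. crossing (x, y) e"
    if "diagonal_on S (x, y)" "(x, y) \<notin> insert (a, b) T" for x y
  proof (cases "x = w \<or> y = w")
    case True
    then show ?thesis
      using ear_on_crossing_apex[OF assms(3) that(1)] by blast
  next
    case False
    then show ?thesis
      using ear_on_diagonal_Diff[OF assms(3) that(1)] T(3) that(2) by blast
  qed
  ultimately show ?thesis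
    unfolding triangulation_on_def
    using ear_on_diagonal[OF assms(1-3)] T(1,2) diagonal_on_Diff crossing_sym by (metis insert_iff prod.collapse)
qed

section \<open>Properly coloured polygons\<close>

definition proper_colouring :: "nat set \<Rightarrow> (nat \<Rightarrow> 'c) \<Rightarrow> bool" where
  "proper_colouring S col \<longleftrightarrow> (\<forall>x y. cyclic_succ S x y \<longrightarrow> col x \<noteq> col y)"

lemma proper_colouring_Diff:
  assumes "finite S" "card S \<ge> 3" "proper_colouring S col"
    and "cyclic_succ S p w" "cyclic_succ S w s" "col p \<noteq> col s"
  shows "proper_colouring (S - {w}) col"
  using cyclic_succ_Diff_cases[OF assms(1,2,4,5)] assms(3,6) unfolding proper_colouring_def by blast

lemma card_ge_3_if_distinct:
  "finite A \<Longrightarrow> {x, y, z} \<subseteq> A \<Longrightarrow> x \<noteq> y \<Longrightarrow> y \<noteq> z \<Longrightarrow> x \<noteq> z \<Longrightarrow> card A \<ge> 3"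
  using card_mono[of A "{x, y, z}"] by auto

lemma colours_alternate:
  assumes fin: "finite S" and m1: "cyclic_succ S (Min S) m1"
    and alternate: "\<And>p w s. cyclic_succ S p w \<Longrightarrow> cyclic_succ S w s \<Longrightarrow> col p = col s"
  shows "col ` S \<subseteq> {col (Min S), col m1}"
proof -
  have "col y = col (Min S) \<or> col y = col m1" if "y \<in> S" for y
    using that
  proof (induction y rule: less_induct)
    case (less y)
    show ?case
    proof (cases "y = Min S")
      case False
      then have "\<exists>x\<in>S. x < y"
        using fin less.prems by (metis Min_in Min_le empty_iff le_neq_implies_less)
      from cyclic_succ_Max_below[OF fin less.prems this] obtain z
        where z: "cyclic_succ S z y" "z < y" by blast
      show ?thesis
      proof (cases "z = Min S")
        case True
        then show ?thesis
          using cyclic_succ_unique[OF m1] z(1) by simp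
      next
        case False
        have "z \<in> S"
          using z(1) cyclic_succD by blast
        then have "\<exists>x\<in>S. x < z"
          using fin False by (metis Min_in Min_le empty_iff le_neq_implies_less)
        from cyclic_succ_Max_below[OF fin \<open>z \<in> S\<close> this] obtain z'
          where z': "cyclic_succ S z' z" "z' < z" by blast
        then show ?thesis
          using less.IH[of z'] z(2) alternate[OF z'(1) z(1)] cyclic_succD by auto
      qed
    qed simp
  qed
  then show ?thesis
    by blast
qed

lemma exists_bichromatic_ear:
  assumes fin: "finite S" and "card S \<ge> 3" and "card (col ` S) \<ge> 3"
  obtains p w s where "cyclic_succ S p w" "cyclic_succ S w s" "col p \<noteq> col s"
proof -
  have "S \<noteq> {}" "card S \<ge> 2"
    using assms(2) by auto
  then obtain m1 where m1: "cyclic_succ S (Min S) m1"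
    using cyclic_succ_exists[OF fin _ Min_in[OF fin]] by blast
  show ?thesis
  proof (rule ccontr)
    assume "\<not> thesis"
    then have "col ` S \<subseteq> {col (Min S), col m1}"
      using colours_alternate[OF fin m1] that by blast
    then show False
      using card_le_2_if_subset_doubleton assms(3) by fastforce
  qed
qed

lemma card_colours_ge_3_if_unique:
  assumes fin: "finite S" and "card S \<ge> 3" and proper: "proper_colouring S col" and "u \<in> S"
    and unique: "\<forall>v\<in>S. col v = col u \<longrightarrow> v = u"
  shows "card (col ` S) \<ge> 3"
proof -
  have card2: "card S \<ge> 2"
    using assms(2) by simp
  obtain p where p: "cyclic_succ S p u"
    using cyclic_pred_exists[OF fin card2 assms(4)] by blast
  then have "p \<in> S"
    by (simp add: cyclic_succD)
  then obtain q where q: "cyclic_succ S q p"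
    using cyclic_pred_exists[OF fin card2] by blast
  then have "q \<in> S" "q \<noteq> u"
    using cyclic_succ_asym[OF fin assms(2)] p by (auto simp: cyclic_succD)
  moreover have "col p \<noteq> col u" "col q \<noteq> col p"
    using proper p q unfolding proper_colouring_def by blast+
  ultimately show ?thesis
    using card_ge_3_if_distinct[of "col ` S" "col u" "col p" "col q"] fin unique \<open>p \<in> S\<close> assms(4)
    by auto
qed

lemma exists_ear_keeping_colours:
  assumes fin: "finite S" and "card S \<ge> 4" and proper: "proper_colouring S col"
    and "card (col ` S) \<ge> 3"
  obtains p w s where "cyclic_succ S p w" "cyclic_succ S w s" "col p \<noteq> col s"
    "card (col ` (S - {w})) \<ge> 3"
proof (cases "\<exists>u\<in>S. \<forall>v\<in>S. col v = col u \<longrightarrow> v = u")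
  case True
  then obtain u where u: "u \<in> S" "\<forall>v\<in>S. col v = col u \<longrightarrow> v = u"
    by blast
  have card: "card S \<ge> 2" "card S \<ge> 3"
    using assms(2) by simp_all
  then obtain w where w: "cyclic_succ S u w"
    using cyclic_succ_exists[OF fin _ u(1)] by blast
  then have "w \<in> S" "w \<noteq> u"
    using cyclic_succD by blast+
  then obtain s where s: "cyclic_succ S w s"
    using cyclic_succ_exists[OF fin card(1)] by blast
  then have "s \<in> S" "s \<noteq> u"
    using cyclic_succ_asym[OF fin card(2)] w cyclic_succD by blast+
  then have "col u \<noteq> col s"
    using u(2) by metis
  moreover have "card (col ` (S - {w})) \<ge> 3"
  proof (rule card_colours_ge_3_if_unique)
    show "proper_colouring (S - {w}) col"
      using proper_colouring_Diff[OF fin card(2) proper w s \<open>col u \<noteq> col s\<close>] .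
    show "card (S - {w}) \<ge> 3"
      using assms(2) \<open>w \<in> S\<close> fin by simp
  qed (use fin u \<open>w \<noteq> u\<close> in auto)
  ultimately show ?thesis
    using that w s by blast
next
  case False
  have "card S \<ge> 3"
    using assms(2) by simp
  then obtain p w s where pws: "cyclic_succ S p w" "cyclic_succ S w s" "col p \<noteq> col s"
    using exists_bichromatic_ear[OF fin _ assms(4)] by blast
  then have "w \<in> S"
    using cyclic_succD by blast
  then obtain v where "v \<in> S - {w}" "col w = col v"
    using False by (metis DiffI singletonD)
  then have "col w \<in> col ` (S - {w})"
    by blast
  moreover have "col ` S = insert (col w) (col ` (S - {w}))"
    using \<open>w \<in> S\<close> by (metis image_insert insert_Diff)
  ultimately have "col ` S = col ` (S - {w})"
    by (simp add: insert_absorb)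
  then show ?thesis
    using that pws assms(4) by simp
qed

lemma proper_colouring_triangulation:
  fixes col :: "nat \<Rightarrow> 'c"
  assumes "finite S" "card S \<ge> 3" "proper_colouring S col" "card (col ` S) \<ge> 3"
  shows "\<exists>T. triangulation_on S T \<and> (\<forall>(x, y)\<in>T. col x \<noteq> col y)"
  using assms
proof (induction "card S" arbitrary: S rule: less_induct)
  case less
  show ?case
  proof (cases "card S = 3")
    case True
    then have "triangulation_on S {}"
      unfolding triangulation_on_def using card_ge_4_if_diagonal_on[OF less.prems(1)] by fastforce
    then show ?thesis
      by blast
  next
    case False
    then have card: "card S \<ge> 4" "card S \<ge> 3"
      using less.prems(2) by simp_all
    obtain p w s where pws: "cyclic_succ S p w" "cyclic_succ S w s" "col p \<noteq> col s"
      and colours: "card (col ` (S - {w})) \<ge> 3"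
      using exists_ear_keeping_colours[OF less.prems(1) card(1) less.prems(3,4)] by blast
    have "w \<in> S" "p \<noteq> s"
      using pws cyclic_succ_asym[OF less.prems(1) card(2)] cyclic_succD by blast+
    then have smaller: "card (S - {w}) < card S" "card (S - {w}) \<ge> 3"
      using less.prems(1) card by (auto simp: card_Diff_singleton_if)
    obtain T where T: "triangulation_on (S - {w}) T" "\<forall>(x, y)\<in>T. col x \<noteq> col y"
      using less.hyps[OF smaller(1) _ smaller(2) proper_colouring_Diff[OF less.prems(1) card(2)
          less.prems(3) pws] colours] less.prems(1) by blast
    have ear: "ear_on S w (min p s) (max p s)"
      using ear_on_cyclic_succ[OF pws(1,2) \<open>p \<noteq> s\<close>] .
    have "col (min p s) \<noteq> col (max p s)"
      using pws(3) by (cases "p \<le> s") (auto simp: min_def max_def)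
    then show ?thesis
      using triangulation_on_insert_ear[OF less.prems(1) card(1) ear T(1)] T(2) by blast
  qed
qed

lemma cyclic_succ_atLeastAtMost:
  assumes "cyclic_succ {1..m} x y"
  shows "(1 \<le> x \<and> x < m \<and> y = Suc x) \<or> (x = m \<and> y = 1)"
proof -
  have xy: "1 \<le> x" "x \<le> m" "1 \<le> y" "y \<le> m"
    using assms unfolding cyclic_succ_def by auto
  from assms consider "x < y" "\<forall>z\<in>{1..m}. \<not> (x < z \<and> z < y)" | "y < x" "\<forall>z\<in>{1..m}. y \<le> z \<and> z \<le> x"
    unfolding cyclic_succ_def by blast
  then show ?thesis
  proof cases
    case 1
    then have "\<not> (x < Suc x \<and> Suc x < y)"
      using xy by auto
    then show ?thesis
      using xy 1 by auto
  next
    case 2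
    then have "y \<le> 1" "m \<le> x"
      using xy by auto
    then show ?thesis
      using xy by auto
  qed
qed

lemma diagonal_on_atLeastAtMost_iff: "diagonal_on {1..m} d \<longleftrightarrow> is_diagonal m d"
proof (cases d)
  case (Pair a b)
  show ?thesis
  proof
    assume "diagonal_on {1..m} d"
    then show "is_diagonal m d"
      unfolding Pair diagonal_on_def is_diagonal_def by auto
  next
    assume diag: "is_diagonal m d"
    have "\<exists>x\<in>{1..m}. x < a \<or> b < x"
    proof (cases "a = 1")
      case True
      then show ?thesis
        using diag unfolding Pair is_diagonal_def by (intro bexI[of _ m]) auto
    next
      case False
      then show ?thesis
        using diag unfolding Pair is_diagonal_def by (intro bexI[of _ 1]) auto
    qed
    then show "diagonal_on {1..m} d"
      using diag unfolding Pair diagonal_on_def is_diagonal_def by (auto intro!: bexI[of _ "Suc a"])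
  qed
qed

lemma triangulation_on_atLeastAtMost_iff: "triangulation_on {1..m} T \<longleftrightarrow> polygon_triangulation m T"
  unfolding triangulation_on_def polygon_triangulation_def diagonal_on_atLeastAtMost_iff by blast

lemma frieze_entry_eq_0_iff:
  "1 \<le> i \<Longrightarrow> i + 2 \<le> j \<Longrightarrow> frieze_entry cs i j = 0 \<longleftrightarrow> frieze_colour cs i = frieze_colour cs j"
  by (simp add: frieze_entry_eq_det2 frieze_colour_eq_iff)

lemma proper_colouring_frieze_colour:
  assumes "quiddity_cycle cs"
  shows "proper_colouring {1..length cs} (frieze_colour cs)"
  unfolding proper_colouring_def
proof (intro allI impI)
  fix x y
  assume "cyclic_succ {1..length cs} x y"
  then consider "1 \<le> x" "y = Suc x" | "x = length cs" "y = 1"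
    using cyclic_succ_atLeastAtMost by blast
  then show "frieze_colour cs x \<noteq> frieze_colour cs y"
  proof cases
    case 2
    then show ?thesis
      using frieze_colour_Suc[of "length cs" cs] frieze_colour_add_length[OF assms, of 1]
        quiddity_cycle_nonempty[OF assms] by (simp add: Suc_le_eq)
  qed (simp add: frieze_colour_Suc)
qed

lemma card_frieze_colours:
  assumes "quiddity_cycle cs" "\<exists>x\<in>set cs. x \<noteq> 0"
  shows "card (frieze_colour cs ` {1..length cs}) \<ge> 3"
proof -
  obtain i where "i < length cs" "cs ! i \<noteq> 0"
    using assms(2) by (auto simp: in_set_conv_nth)
  then have "cper cs (Suc i) \<noteq> 0"
    by (simp add: cper_def)
  then have "frieze_colour cs (Suc i) \<noteq> frieze_colour cs (Suc (Suc (Suc i)))"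
    by (simp add: frieze_colour_Suc_Suc)
  moreover have "frieze_colour cs k \<in> frieze_colour cs ` {1..length cs}" if "1 \<le> k" for k
    using frieze_colour_in_range[OF assms(1) that] .
  moreover have "frieze_colour cs (Suc i) \<noteq> frieze_colour cs (Suc (Suc i))"
    "frieze_colour cs (Suc (Suc i)) \<noteq> frieze_colour cs (Suc (Suc (Suc i)))"
    by (simp_all add: frieze_colour_Suc)
  ultimately show ?thesis
    using card_ge_3_if_distinct[of "frieze_colour cs ` {1..length cs}" "frieze_colour cs (Suc i)"
        "frieze_colour cs (Suc (Suc i))" "frieze_colour cs (Suc (Suc (Suc i)))"]
    by simp
qed

theorem theorem5p4:
  fixes cs :: "complex list" and m :: nat
  assumes "m \<ge> 4" and "length cs = m"
    and "quiddity_cycle cs"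
    and "\<exists>x\<in>set cs. x \<noteq> 0"
  shows "\<exists>T. polygon_triangulation m T \<and> (\<forall>(i, j)\<in>T. frieze_entry cs i j \<noteq> 0)"
proof -
  obtain T where T: "triangulation_on {1..m} T"
    and bichromatic: "\<forall>(i, j)\<in>T. frieze_colour cs i \<noteq> frieze_colour cs j"
    using proper_colouring_triangulation[of "{1..m}" "frieze_colour cs"]
      proper_colouring_frieze_colour[OF assms(3)] card_frieze_colours[OF assms(3,4)] assms(1,2)
    by auto
  have "1 \<le> i \<and> i + 2 \<le> j" if "(i, j) \<in> T" for i j
    using T that unfolding triangulation_on_def diagonal_on_atLeastAtMost_iff is_diagonal_def by auto
  then have "\<forall>(i, j)\<in>T. frieze_entry cs i j \<noteq> 0"
    using bichromatic frieze_entry_eq_0_iff by auto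
  then show ?thesis
    using T triangulation_on_atLeastAtMost_iff by blast
qed

end
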